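(* Let $d$ be odd and $N = p^4$ for some prime $p \neq 2$. In the coefficient-choosing game of degree $d$ over $\mathbb{Z}/N\mathbb{Z}$, Wanda has a winning strategy (whether she moves first or second).
   Context: The coefficient-choosing game of degree $d$ over $R = \mathbb{Z}/N\mathbb{Z}$: Nora and Wanda alternately choose coefficients of $f(x) = a_d x^d + \cdots + a_0$; on each move the current player picks a not-yet-chosen coefficient and assigns it a value in $R$, subject to $a_d \neq 0$, $a_0 \neq 0$. After all $d+1$ coefficients are chosen, Wanda wins if $f$ has a root in $R$, and Nora wins otherwise. *)

theory Defs
  imports "HOL-Computational_Algebra.Primes"
begin

text \<open>Elements of Z/NZ are represented
by integers in {0..<N}. A position is a partial assignment s of coefficients a_0..a_d
(s i = None means a_i not yet chosen).\<close>

definition legal_move :: "nat \<Rightarrow> int \<Rightarrow> (nat \<Rightarrow> int option) \<Rightarrow> nat \<Rightarrow> int \<Rightarrow> bool" where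
  "legal_move d N s i v \<longleftrightarrow> i \<le> d \<and> s i = None \<and> 0 \<le> v \<and> v < N \<and> ((i = 0 \<or> i = d) \<longrightarrow> v \<noteq> 0)"

definition has_root_mod :: "nat \<Rightarrow> int \<Rightarrow> (nat \<Rightarrow> int option) \<Rightarrow> bool" where
  "has_root_mod d N s \<longleftrightarrow> (\<exists>x. 0 \<le> x \<and> x < N \<and> (\<Sum>i\<le>d. the (s i) * x ^ i) mod N = 0)"

text \<open>wanda_wins k d N s w: with k moves remaining from position s, where w says whether
it is Wanda's turn, Wanda can force a win.\<close>

fun wanda_wins :: "nat \<Rightarrow> nat \<Rightarrow> int \<Rightarrow> (nat \<Rightarrow> int option) \<Rightarrow> bool \<Rightarrow> bool" where
  "wanda_wins 0 d N s w = has_root_mod d N s"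
| "wanda_wins (Suc k) d N s w =
     (if w then (\<exists>i v. legal_move d N s i v \<and> wanda_wins k d N (s(i := Some v)) False)
      else (\<forall>i v. legal_move d N s i v \<longrightarrow> wanda_wins k d N (s(i := Some v)) True))"

definition wanda_has_winning_strategy :: "nat \<Rightarrow> int \<Rightarrow> bool \<Rightarrow> bool" where
  "wanda_has_winning_strategy d N w0 = wanda_wins (Suc d) d N (\<lambda>_. None) w0"

end

(*
  Moving second, Wanda copies each value Nora chooses onto the partner coefficient, pairing
  a_0 with a_d and a_(2j-1) with a_(2j).  Since d is odd, partners have opposite parity, so
  f(-1) = 0 in the end.

  Moving first with d >= 3, Wanda chooses a_0 = p^2.  If Nora's reply leaves a_1 open, Wanda
  chooses a_1 = 1 and -p^2 is a root modulo p^4.  If Nora chooses a_1 = v, Wanda answers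
  a_2 = -1 when p^2 divides v and a_2 = 0 otherwise.  Every completion then has a root:
  -p^2 z with v z = 1 (mod p^2) when p does not divide v, and otherwise one of the form p t.
  If p^2 does not divide v, the condition on t is a congruence modulo p^2 with invertible
  linear term (as a_2 = 0), solved by one Newton step.  If p^2 divides v, then a_2 = -1 turns
  it, for t = 1 + p s, into the linear congruence 2 s = v/p^2 + a_3 (mod p), solvable as p is
  odd.  For d = 1 Wanda simply chooses a_1 = 1.
*)

theory Submission
  imports Defs "HOL-Number_Theory.Cong"
begin

definition unchosen :: "nat \<Rightarrow> (nat \<Rightarrow> int option) \<Rightarrow> nat set" where
  "unchosen d s = {i. i \<le> d \<and> s i = None}"

definition legal_position :: "nat \<Rightarrow> int \<Rightarrow> (nat \<Rightarrow> int option) \<Rightarrow> bool" where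
  "legal_position d N s \<longleftrightarrow> (\<forall>i v. s i = Some v \<longrightarrow> legal_move d N (s(i := None)) i v)"

lemma finite_unchosen: "finite (unchosen d s)"
  unfolding unchosen_def by (rule finite_subset[of _ "{..d}"]) auto

lemma card_unchosen_update:
  assumes "legal_move d N s i v"
  shows "card (unchosen d (s(i := Some v))) = card (unchosen d s) - 1"
proof -
  have "unchosen d (s(i := Some v)) = unchosen d s - {i}"
    unfolding unchosen_def by auto
  moreover have "i \<in> unchosen d s"
    using assms unfolding unchosen_def legal_move_def by simp
  ultimately show ?thesis
    using finite_unchosen by simp
qed

lemma unchosen_empty_iff: "unchosen d s = {} \<longleftrightarrow> (\<forall>i\<le>d. s i \<noteq> None)"
  unfolding unchosen_def by auto

lemma unchosen_empty: "unchosen d (\<lambda>_. None) = {..d}"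
  unfolding unchosen_def by auto

lemma legal_position_empty: "legal_position d N (\<lambda>_. None)"
  unfolding legal_position_def by simp

lemma legal_position_update:
  assumes "legal_position d N s" "legal_move d N s i v"
  shows "legal_position d N (s(i := Some v))"
  using assms unfolding legal_position_def legal_move_def
  by (auto simp: fun_upd_idem)

lemma wanda_wins_by_invariant:
  fixes Inv :: "(nat \<Rightarrow> int option) \<Rightarrow> bool \<Rightarrow> bool"
  assumes wanda_move: "\<And>s. Inv s True \<Longrightarrow> legal_position d N s \<Longrightarrow> unchosen d s \<noteq> {} \<Longrightarrow>
      \<exists>i v. legal_move d N s i v \<and> Inv (s(i := Some v)) False"
    and nora_move: "\<And>s i v. Inv s False \<Longrightarrow> legal_move d N s i v \<Longrightarrow> Inv (s(i := Some v)) True"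
    and final: "\<And>s w. Inv s w \<Longrightarrow> unchosen d s = {} \<Longrightarrow> has_root_mod d N s"
  shows "card (unchosen d s) = k \<Longrightarrow> legal_position d N s \<Longrightarrow> Inv s w \<Longrightarrow> wanda_wins k d N s w"
proof (induction k arbitrary: s w)
  case 0
  then show ?case
    using final finite_unchosen by simp
next
  case (Suc k)
  have step: "wanda_wins k d N (s(i := Some v)) w'"
    if "legal_move d N s i v" "Inv (s(i := Some v)) w'" for i v w'
  proof (rule Suc.IH)
    show "card (unchosen d (s(i := Some v))) = k"
      using card_unchosen_update[OF that(1)] Suc.prems(1) by simp
    show "legal_position d N (s(i := Some v))"
      using legal_position_update[OF Suc.prems(2) that(1)] .
  qed (fact that(2))
  show ?case
  proof (cases w)
    case True
    have "unchosen d s \<noteq> {}"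
      using Suc.prems(1) by auto
    then show ?thesis
      using True wanda_move Suc.prems step by fastforce
  next
    case False
    then show ?thesis
      using nora_move Suc.prems step by simp
  qed
qed

definition has_root_mod_coeffs :: "nat \<Rightarrow> int \<Rightarrow> (nat \<Rightarrow> int) \<Rightarrow> bool" where
  "has_root_mod_coeffs d N c \<longleftrightarrow> (\<exists>x. 0 \<le> x \<and> x < N \<and> (\<Sum>i\<le>d. c i * x ^ i) mod N = 0)"

lemma has_root_mod_iff_coeffs: "has_root_mod d N s \<longleftrightarrow> has_root_mod_coeffs d N (\<lambda>i. the (s i))"
  unfolding has_root_mod_def has_root_mod_coeffs_def ..

lemma has_root_mod_coeffsI:
  fixes N y :: int
  assumes "0 < N" "N dvd (\<Sum>i\<le>d. c i * y ^ i)"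
  shows "has_root_mod_coeffs d N c"
  unfolding has_root_mod_coeffs_def
proof (intro exI conjI)
  have "[(\<Sum>i\<le>d. c i * (y mod N) ^ i) = (\<Sum>i\<le>d. c i * y ^ i)] (mod N)"
    by (intro cong_sum cong_mult cong_pow cong_refl) (simp add: cong_def)
  then show "(\<Sum>i\<le>d. c i * (y mod N) ^ i) mod N = 0"
    using assms(2) by (simp add: cong_def)
qed (use assms(1) in auto)

lemma dvd_sum_high_powers:
  fixes N y :: int
  assumes "m \<le> Suc d" "N dvd y ^ m"
  shows "N dvd (\<Sum>i\<le>d. c i * y ^ i) \<longleftrightarrow> N dvd (\<Sum>i<m. c i * y ^ i)"
proof -
  have "{..d} = {..<m} \<union> {m..d}"
    using assms(1) by auto
  then have split: "(\<Sum>i\<le>d. c i * y ^ i) = (\<Sum>i<m. c i * y ^ i) + (\<Sum>i\<in>{m..d}. c i * y ^ i)"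
    by (simp add: sum.union_disjoint ivl_disj_int)
  have "N dvd c i * y ^ i" if "m \<le> i" for i
    using assms(2) le_imp_power_dvd[OF that, of y] by (meson dvd_mult dvd_trans)
  then have "N dvd (\<Sum>i\<in>{m..d}. c i * y ^ i)"
    by (intro dvd_sum) simp
  then show ?thesis
    unfolding split by (simp add: dvd_add_left_iff)
qed

lemma has_root_mod_coeffs_low_terms:
  fixes N y :: int
  assumes "0 < N" "m \<le> Suc d" "N dvd y ^ m" "N dvd (\<Sum>i<m. c i * y ^ i)"
  shows "has_root_mod_coeffs d N c"
  using assms has_root_mod_coeffsI dvd_sum_high_powers by blast

definition forces_root :: "nat \<Rightarrow> int \<Rightarrow> (nat \<Rightarrow> int option) \<Rightarrow> bool" where
  "forces_root d N s \<longleftrightarrow>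
     (\<forall>c. has_root_mod_coeffs d N (\<lambda>i. case s i of None \<Rightarrow> c i | Some v \<Rightarrow> v))"

lemma forces_root_update:
  assumes "s i = None" "forces_root d N s"
  shows "forces_root d N (s(i := Some v))"
  unfolding forces_root_def
proof
  fix c
  have "(\<lambda>j. case (s(i := Some v)) j of None \<Rightarrow> c j | Some w \<Rightarrow> w)
      = (\<lambda>j. case s j of None \<Rightarrow> (c(i := v)) j | Some w \<Rightarrow> w)"
    using assms(1) by (auto simp: fun_eq_iff split: option.split)
  then show "has_root_mod_coeffs d N (\<lambda>j. case (s(i := Some v)) j of None \<Rightarrow> c j | Some w \<Rightarrow> w)"
    using assms(2) unfolding forces_root_def by metis
qed

lemma forces_root_has_root_mod:
  assumes "forces_root d N s"
  shows "has_root_mod d N s"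
proof -
  have "(\<lambda>i. case s i of None \<Rightarrow> the (s i) | Some v \<Rightarrow> v) = (\<lambda>i. the (s i))"
    by (auto split: option.split)
  then show ?thesis
    using assms unfolding forces_root_def has_root_mod_iff_coeffs by metis
qed

lemma wanda_wins_if_forces_root:
  assumes "1 < N" "card (unchosen d s) = k" "legal_position d N s" "forces_root d N s"
  shows "wanda_wins k d N s w"
proof (rule wanda_wins_by_invariant[where Inv = "\<lambda>s w. forces_root d N s"])
  fix s assume "forces_root d N s" "unchosen d s \<noteq> {}"
  then obtain i where "i \<le> d" "s i = None"
    unfolding unchosen_def by auto
  then have "legal_move d N s i 1 \<and> forces_root d N (s(i := Some 1))"
    using assms(1) \<open>forces_root d N s\<close> forces_root_update by (simp add: legal_move_def)
  then show "\<exists>i v. legal_move d N s i v \<and> forces_root d N (s(i := Some v))"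
    by blast
qed (use assms in \<open>auto simp: legal_move_def forces_root_update forces_root_has_root_mod\<close>)

lemma wanda_wins_by_forcing_move:
  assumes "1 < N" "card (unchosen d s) = Suc k" "legal_position d N s"
    and "legal_move d N s i v" "forces_root d N (s(i := Some v))"
  shows "wanda_wins (Suc k) d N s True"
proof -
  have "wanda_wins k d N (s(i := Some v)) False"
    using assms card_unchosen_update legal_position_update wanda_wins_if_forces_root by simp
  then show ?thesis
    using assms(4) by auto
qed

definition partner :: "nat \<Rightarrow> nat \<Rightarrow> nat" where
  "partner d i = (if i = 0 then d else if i = d then 0 else if odd i then i + 1 else i - 1)"

context
  fixes d :: nat
  assumes odd_d: "odd d"
begin

lemma partner_le: "i \<le> d \<Longrightarrow> partner d i \<le> d"
  using odd_d unfolding partner_def by (auto elim!: oddE)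

lemma partner_partner: "i \<le> d \<Longrightarrow> partner d (partner d i) = i"
  using odd_d unfolding partner_def by (auto elim!: oddE evenE)

lemma partner_neq: "i \<le> d \<Longrightarrow> partner d i \<noteq> i"
  using odd_d unfolding partner_def by (auto elim!: oddE)

lemma partner_endpoint_iff: "i \<le> d \<Longrightarrow> partner d i = 0 \<or> partner d i = d \<longleftrightarrow> i = 0 \<or> i = d"
  using odd_d unfolding partner_def by auto

lemma minus_one_power_partner: "i \<le> d \<Longrightarrow> (-1::int) ^ partner d i = - ((-1) ^ i)"
  using odd_d unfolding partner_def by (auto elim!: oddE evenE)

lemma alternating_sum_eq_0:
  fixes a :: "nat \<Rightarrow> int"
  assumes "\<And>i. i \<le> d \<Longrightarrow> a (partner d i) = a i"
  shows "(\<Sum>i\<le>d. a i * (-1) ^ i) = 0"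
proof -
  have "(\<Sum>i\<le>d. a i * (-1) ^ i) = (\<Sum>i\<le>d. a (partner d i) * (-1) ^ partner d i)"
    by (rule sum.reindex_bij_witness[of _ "partner d" "partner d"])
      (auto simp: partner_partner partner_le)
  also have "\<dots> = - (\<Sum>i\<le>d. a i * (-1) ^ i)"
    by (simp add: assms minus_one_power_partner sum_negf)
  finally show ?thesis
    by simp
qed

end

definition paired :: "nat \<Rightarrow> (nat \<Rightarrow> int option) \<Rightarrow> bool" where
  "paired d s \<longleftrightarrow> (\<forall>i\<le>d. s (partner d i) = s i)"

lemma paired_has_root_mod:
  assumes "odd d" "0 < N" "paired d s"
  shows "has_root_mod d N s"
  unfolding has_root_mod_iff_coeffs
proof (rule has_root_mod_coeffsI[where y = "-1"])
  show "N dvd (\<Sum>i\<le>d. the (s i) * (-1) ^ i)"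
    using alternating_sum_eq_0[OF assms(1)] assms(3) unfolding paired_def by simp
qed (fact assms(2))

lemma paired_update_pair:
  assumes "odd d" "i \<le> d" "paired d s"
  shows "paired d (s(i := x, partner d i := x))"
  unfolding paired_def
proof (intro allI impI)
  fix k assume "k \<le> d"
  then consider "k = i" | "k = partner d i" | "partner d k \<noteq> i" "partner d k \<noteq> partner d i" "k \<noteq> i"
    "k \<noteq> partner d i"
    using partner_partner[OF assms(1)] assms(2) by metis
  then show "(s(i := x, partner d i := x)) (partner d k) = (s(i := x, partner d i := x)) k"
    using assms \<open>k \<le> d\<close> partner_partner[OF assms(1)] unfolding paired_def by cases auto
qed

lemma paired_reset_partner_unchosen:
  assumes "odd d" "j \<le> d" "paired d (s(j := None))"
  shows "s (partner d j) = None"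
  using assms partner_le partner_neq unfolding paired_def by (metis fun_upd_apply)

definition nearly_paired :: "nat \<Rightarrow> (nat \<Rightarrow> int option) \<Rightarrow> bool" where
  "nearly_paired d s \<longleftrightarrow> (\<exists>j\<le>d. s j \<noteq> None \<and> paired d (s(j := None)))"

lemma paired_update_nearly_paired:
  assumes "paired d s" "legal_move d N s i v"
  shows "nearly_paired d (s(i := Some v))"
  using assms unfolding nearly_paired_def legal_move_def by (auto simp: fun_upd_idem)

lemma nearly_paired_move_paired:
  assumes "odd d" "legal_position d N s" "nearly_paired d s"
  shows "\<exists>i v. legal_move d N s i v \<and> paired d (s(i := Some v))"
proof -
  obtain j v where j: "j \<le> d" "s j = Some v" "paired d (s(j := None))"
    using assms(3) unfolding nearly_paired_def by auto
  define j' where "j' = partner d j"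
  have "s j' = None"
    using paired_reset_partner_unchosen[OF assms(1) j(1,3)] by (simp add: j'_def)
  moreover have "legal_move d N (s(j := None)) j v"
    using assms(2) j(2) unfolding legal_position_def by simp
  ultimately have "legal_move d N s j' v"
    using partner_le[OF assms(1) j(1)] partner_endpoint_iff[OF assms(1) j(1)]
    unfolding legal_move_def j'_def by simp
  moreover have "(s(j := None))(j := Some v, j' := Some v) = s(j' := Some v)"
    using j(2) by (simp add: fun_upd_idem)
  then have "paired d (s(j' := Some v))"
    using paired_update_pair[OF assms(1) j(1,3), of "Some v"] by (simp add: j'_def)
  ultimately show ?thesis
    by blast
qed

lemma wanda_wins_second:
  assumes "odd d" "0 < N"
  shows "wanda_wins (Suc d) d N (\<lambda>_. None) False"
proof (rule wanda_wins_by_invariant[where Inv = "\<lambda>s w. if w then nearly_paired d s else paired d s"])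
  show "card (unchosen d (\<lambda>_. None)) = Suc d"
    by (simp add: unchosen_empty)
  show "\<exists>i v. legal_move d N s i v \<and> (if False then nearly_paired d (s(i := Some v))
      else paired d (s(i := Some v)))"
    if "if True then nearly_paired d s else paired d s" "legal_position d N s" for s
    using nearly_paired_move_paired[OF assms(1)] that by simp
  show "has_root_mod d N s"
    if "if w then nearly_paired d s else paired d s" "unchosen d s = {}" for s w
    using that paired_reset_partner_unchosen[OF assms(1)] partner_le[OF assms(1)]
      paired_has_root_mod[OF assms]
    unfolding unchosen_empty_iff nearly_paired_def by (metis (full_types))
qed (auto simp: legal_position_empty paired_def paired_update_nearly_paired)

lemma has_root_mod_coeffs_monic_linear:
  assumes "0 < N" "c 1 = 1"
  shows "has_root_mod_coeffs 1 N c"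
  by (rule has_root_mod_coeffsI[where y = "- c 0"]) (use assms in auto)

lemma has_root_mod_p4_linear_one:
  fixes a :: int
  assumes "1 \<le> d" "a \<noteq> 0" "c 0 = a ^ 2" "c 1 = 1"
  shows "has_root_mod_coeffs d (a ^ 4) c"
proof (rule has_root_mod_coeffs_low_terms[where m = 2 and y = "- (a ^ 2)"])
  show "a ^ 4 dvd (- (a ^ 2)) ^ 2"
    by (simp add: power_mult[symmetric])
  show "0 < a ^ 4"
    using assms(2) by (simp add: zero_less_power_eq)
qed (use assms in \<open>simp_all add: eval_nat_numeral\<close>)

lemma prime_square_inverse:
  fixes p u :: int
  assumes "prime p" "\<not> p dvd u"
  obtains z m where "u * z = 1 + p ^ 2 * m"
proof -
  have "coprime u (p ^ 2)"
    using assms prime_imp_coprime by (simp add: ac_simps)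
  then obtain z where "[u * z = 1] (mod p ^ 2)"
    using cong_solve_coprime_int by blast
  then have "p ^ 2 dvd u * z - 1"
    by (simp add: cong_iff_dvd_diff)
  then obtain m where "u * z - 1 = p ^ 2 * m" ..
  then show ?thesis
    using that[of z m] by simp
qed

lemma has_root_mod_p4_coprime_linear:
  fixes p :: int
  assumes "prime p" "1 \<le> d" "c 0 = p ^ 2" "\<not> p dvd c 1"
  shows "has_root_mod_coeffs d (p ^ 4) c"
proof -
  obtain z m where zm: "c 1 * z = 1 + p ^ 2 * m"
    using prime_square_inverse[OF assms(1,4)] .
  have "p ^ 4 dvd p ^ 2 * (1 - c 1 * z)"
    unfolding zm by (simp add: eval_nat_numeral)
  moreover have "(\<Sum>i<2. c i * (- (p ^ 2 * z)) ^ i) = p ^ 2 * (1 - c 1 * z)"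
    using assms(3) by (simp add: eval_nat_numeral algebra_simps)
  ultimately show ?thesis
    using assms prime_gt_0_int
    by (intro has_root_mod_coeffs_low_terms[where m = 2 and y = "- (p ^ 2 * z)"])
      (simp_all add: power_mult_distrib power_mult[symmetric])
qed

lemma sum_lessThan_4: "(\<Sum>i::nat<4. f i) = f 0 + f 1 + f 2 + (f 3 :: 'a::comm_monoid_add)"
  by (simp add: eval_nat_numeral add.assoc)

lemma has_root_mod_p4_linear_exactly_p:
  fixes p u :: int
  assumes "prime p" "3 \<le> d" "c 0 = p ^ 2" "c 1 = p * u" "\<not> p dvd u" "c 2 = 0"
  shows "has_root_mod_coeffs d (p ^ 4) c"
proof -
  obtain z m where zm: "u * z = 1 + p ^ 2 * m"
    using prime_square_inverse[OF assms(1,5)] .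
  define t0 where "t0 = - z"
  \<comment> \<open>One Newton step from \<open>t0\<close>: modulo \<open>p\<^sup>2\<close>,
    \<open>1 + u t + p c\<^sub>3 t\<^sup>3 \<equiv> (1 + p c\<^sub>3 t0\<^sup>3) (1 + u t0) \<equiv> 0\<close>.\<close>
  define t where "t = t0 + p * c 3 * t0 ^ 4"
  define R where "R = 3 * t0 ^ 2 * (c 3 * t0 ^ 4) + 3 * t0 * p * (c 3 * t0 ^ 4) ^ 2 + p ^ 2 * (c 3 * t0 ^ 4) ^ 3"
  have "(\<Sum>i<4. c i * (p * t) ^ i) = p ^ 2 * (1 + u * t + p * c 3 * t ^ 3)"
    unfolding sum_lessThan_4 assms(3,4,6) by algebra
  also have "\<dots> = p ^ 4 * (c 3 * R - (1 + p * c 3 * t0 ^ 3) * m)"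
    using zm unfolding t_def t0_def R_def by algebra
  finally have "p ^ 4 dvd (\<Sum>i<4. c i * (p * t) ^ i)"
    by simp
  then show ?thesis
    using assms(1,2) prime_gt_0_int
    by (intro has_root_mod_coeffs_low_terms[where m = 4 and y = "p * t"])
      (simp_all add: power_mult_distrib)
qed

lemma has_root_mod_p4_linear_p2:
  fixes p :: int
  assumes "prime p" "p \<noteq> 2" "3 \<le> d" "c 0 = p ^ 2" "p ^ 2 dvd c 1" "c 2 = p ^ 4 - 1"
  shows "has_root_mod_coeffs d (p ^ 4) c"
proof -
  obtain e where e: "c 1 = p ^ 2 * e"
    using assms(5) ..
  have "odd p"
    using assms(1,2) prime_odd_int prime_ge_2_int by (metis order_le_less)
  then obtain h where h: "p = 2 * h - 1"
    by (metis add_diff_cancel_right' evenE odd_add odd_one)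
  \<comment> \<open>Modulo \<open>p\<^sup>4\<close> the value at \<open>p (1 + p s)\<close> is \<open>p\<^sup>3 (e + c\<^sub>3 - 2 s)\<close>,
    and \<open>2 h \<equiv> 1 (mod p)\<close>.\<close>
  define s where "s = (e + c 3) * h"
  define t where "t = 1 + p * s"
  have "(\<Sum>i<4. c i * (p * t) ^ i)
      = p ^ 4 * (e * s + p ^ 2 * t ^ 2 + c 3 * (3 * s + 3 * p * s ^ 2 + p ^ 2 * s ^ 3) - s ^ 2 - (e + c 3))"
    unfolding sum_lessThan_4 assms(4,6) e t_def s_def h by algebra
  then have "p ^ 4 dvd (\<Sum>i<4. c i * (p * t) ^ i)"
    by simp
  then show ?thesis
    using assms(1,3) prime_gt_0_int
    by (intro has_root_mod_coeffs_low_terms[where m = 4 and y = "p * t"])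
      (simp_all add: power_mult_distrib)
qed

lemma has_root_mod_p4_after_reply:
  fixes p :: int
  assumes "prime p" "p \<noteq> 2" "3 \<le> d" "c 0 = p ^ 2" "c 2 = (if p ^ 2 dvd c 1 then p ^ 4 - 1 else 0)"
  shows "has_root_mod_coeffs d (p ^ 4) c"
proof (cases "p dvd c 1")
  case False
  then show ?thesis
    using has_root_mod_p4_coprime_linear assms by simp
next
  case True
  then obtain u where u: "c 1 = p * u" ..
  have "p \<noteq> 0"
    using assms(1) by auto
  then have "p ^ 2 dvd c 1 \<longleftrightarrow> p dvd u"
    unfolding u power2_eq_square by simp
  then show ?thesis
    using has_root_mod_p4_linear_exactly_p[of p d c u] has_root_mod_p4_linear_p2[of p d c] assms u
    by (cases "p dvd u") simp_all
qed

lemma wanda_wins_first_linear: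
  assumes "1 < N"
  shows "wanda_wins 2 1 N (\<lambda>_. None) True"
  unfolding numeral_2_eq_2
proof (rule wanda_wins_by_forcing_move[where i = 1 and v = 1])
  show "forces_root 1 N ((\<lambda>_. None)(1 := Some 1))"
    unfolding forces_root_def by (intro allI has_root_mod_coeffs_monic_linear) (use assms in auto)
qed (use assms in \<open>auto simp: unchosen_empty legal_move_def legal_position_empty\<close>)

lemma forcing_reply_p4:
  fixes p :: int
  defines "s1 \<equiv> (\<lambda>_. None)(0 := Some (p ^ 2))"
  assumes "prime p" "p \<noteq> 2" "3 \<le> d" "legal_move d (p ^ 4) s1 i v"
  shows "\<exists>j w. legal_move d (p ^ 4) (s1(i := Some v)) j w \<and>
    forces_root d (p ^ 4) (s1(i := Some v, j := Some w))"
proof -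
  have "1 < p"
    using assms(2) by (rule prime_gt_1_int)
  then have "1 < p ^ 4"
    by (simp add: one_less_power)
  have "i \<noteq> 0"
    using assms(5) by (auto simp: legal_move_def s1_def split: if_splits)
  show ?thesis
  proof (cases "i = 1")
    case False
    have "legal_move d (p ^ 4) (s1(i := Some v)) 1 1"
      using False \<open>1 < p ^ 4\<close> assms(4) by (simp add: legal_move_def s1_def)
    moreover have "forces_root d (p ^ 4) (s1(i := Some v, 1 := Some 1))"
      unfolding forces_root_def
      by (intro allI has_root_mod_p4_linear_one)
        (use False \<open>i \<noteq> 0\<close> assms(4) \<open>1 < p\<close> in \<open>simp_all add: s1_def\<close>)
    ultimately show ?thesis
      by blast
  next
    case True
    define w where "w = (if p ^ 2 dvd v then p ^ 4 - 1 else 0)"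
    have "legal_move d (p ^ 4) (s1(i := Some v)) 2 w"
      using True \<open>1 < p\<close> \<open>1 < p ^ 4\<close> assms(4) by (simp add: legal_move_def s1_def w_def)
    moreover have "forces_root d (p ^ 4) (s1(i := Some v, 2 := Some w))"
      unfolding forces_root_def
      by (intro allI has_root_mod_p4_after_reply)
        (use True assms(2-4) w_def in \<open>simp_all add: s1_def\<close>)
    ultimately show ?thesis
      by blast
  qed
qed

lemma wanda_wins_first_p4:
  fixes p :: int
  assumes "prime p" "p \<noteq> 2" "3 \<le> d"
  shows "wanda_wins (Suc d) d (p ^ 4) (\<lambda>_. None) True"
proof -
  define N where "N = p ^ 4"
  define s1 :: "nat \<Rightarrow> int option" where "s1 = (\<lambda>_. None)(0 := Some (p ^ 2))"
  define k where "k = d - 2"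
  have d: "d = Suc (Suc k)"
    using assms(3) unfolding k_def by simp
  have "1 < p"
    using assms(1) by (rule prime_gt_1_int)
  then have "0 < p ^ 2" "p ^ 2 < N" "1 < N"
    unfolding N_def by (simp_all add: one_less_power power_strict_increasing_iff)
  then have start: "legal_move d N (\<lambda>_. None) 0 (p ^ 2)"
    by (simp add: legal_move_def)
  have "wanda_wins (Suc k) d N (s1(i := Some v)) True" if nora: "legal_move d N s1 i v" for i v
  proof -
    have "card (unchosen d s1) = d"
      using card_unchosen_update[OF start] unfolding s1_def by (simp add: unchosen_empty)
    then have card: "card (unchosen d (s1(i := Some v))) = Suc k"
      using card_unchosen_update[OF nora] d by simp
    have legal: "legal_position d N (s1(i := Some v))"
      using legal_position_update[OF legal_position_update[OF legal_position_empty start, folded s1_def] nora] .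
    obtain j w where "legal_move d N (s1(i := Some v)) j w" "forces_root d N (s1(i := Some v, j := Some w))"
      using forcing_reply_p4[OF assms] nora unfolding N_def s1_def by blast
    then show ?thesis
      by (rule wanda_wins_by_forcing_move[OF \<open>1 < N\<close> card legal])
  qed
  then have "wanda_wins d d N s1 False"
    using d by simp
  then show ?thesis
    using start unfolding N_def s1_def by auto
qed

theorem lemma8:
  fixes d :: nat and p N :: int
  assumes "odd d" and "prime p" and "p \<noteq> 2" and "N = p ^ 4"
  shows "wanda_has_winning_strategy d N True \<and> wanda_has_winning_strategy d N False"
proof -
  have "1 < N"
    using assms(2,4) prime_gt_1_int one_less_power by simp
  have "wanda_wins (Suc d) d N (\<lambda>_. None) True"
  proof (cases "d = 1")
    case True
    then show ?thesis
      using wanda_wins_first_linear[OF \<open>1 < N\<close>] by (simp add: numeral_2_eq_2)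
  next
    case False
    with \<open>odd d\<close> have "3 \<le> d"
      by (auto elim: oddE)
    then show ?thesis
      using wanda_wins_first_p4 assms(2-4) by simp
  qed
  moreover have "wanda_wins (Suc d) d N (\<lambda>_. None) False"
    using wanda_wins_second assms(1) \<open>1 < N\<close> by simp
  ultimately show ?thesis
    unfolding wanda_has_winning_strategy_def by simp
qed

end
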